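(* Let $a\in\mathbb F^*$ and let $g,h\in\mathcal R$ satisfy $x^n-a=hg$, where $\deg(h)=k$. Let $g_0$ be the constant coefficient of $g$, let $c=\gamma(a,g)$, and set $\widehat g^{r}=\rho_r(\theta^n(g))$ and $\widehat h^{l}=\rho_l(\theta^{-n}(h))$. Then: (1) $M_a^\theta(\overline g)^{\mathsf T}=M_{c^{-1}}^\theta(\overline{g^\#})$, where $g^\#=a\,\widehat g^{r}x^k-c\,g_0\,(x^n-c^{-1})$; (2) $M_c^\theta(\overline{x^k})\,M_a^\theta(\overline g)=M^\theta_{\theta^k(c^{-1})}(\overline{a\widehat g^{r}})^{\mathsf T}$; (3) $M^\theta_{\theta^{k-n}(c^{-1})}(\overline{x^{n-k}})\,M^\theta_{a^{-1}}(\overline{\widehat h^{l}})=M^\theta_c(\overline{a^{-1}h})^{\mathsf T}$.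
   Context: $\mathbb F$ is a finite field, $\theta\in\mathrm{Aut}(\mathbb F)$, and $\mathcal R=\mathbb F[x;\theta]$ is the skew polynomial ring: its elements are $\sum_i f_ix^i$ with $f_i\in\mathbb F$ (coefficients written on the left), with the usual addition and multiplication determined by $xb=\theta(b)x$ for $b\in\mathbb F$ together with associativity and distributivity. Fix $n\in\mathbb N$. For $b\in\mathbb F^*$, $\mathcal S_b=\mathcal R/\mathcal R(x^n-b)$ is the quotient left $\mathcal R$-module; $\overline f$ denotes the coset of $f\in\mathcal R$, and in an expression $M^\theta_b(\overline f)$ the coset is always taken in $\mathcal S_b$. The map $\mathfrak p_b:\mathbb F^n\to\mathcal S_b$, $(c_0,\dots,c_{n-1})\mapsto\overline{\sum_{i=0}^{n-1}c_ix^i}$ is a left $\mathbb F$-linear isomorphism and $\mathfrak v_b=\mathfrak p_b^{-1}$. The $(\theta,b)$-circulant of $\overline f\in\mathcal S_b$ is the $n\times n$ matrix $M^\theta_b(\overline f)$ whose row with index $i$ ($i=0,\dots,n-1$) is $\mathfrak v_b(\overline{x^if})$. The automorphism $\theta$ (and its integer powers $\theta^m$) is extended to $\mathcal R$ coefficientwise: $\theta^m(\sum f_ix^i)=\sum\theta^m(f_i)x^i$. For a right divisor $g=\sum g_ix^i$ of $x^n-a$ (so $g_0\neq0$) one sets $\gamma(a,g)=a\,g_0^{-1}\theta^n(g_0)$. For nonzero $f=\sum_{i=0}^tf_ix^i$ with $f_t\ne0$ the left and right reciprocals are $\rho_l(f)=\sum_{i=0}^t\theta^i(f_{t-i})x^i$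 and $\rho_r(f)=\sum_{i=0}^t\theta^{i-t}(f_{t-i})x^i$. *)

theory Defs
  imports "HOL-Computational_Algebra.Polynomial" "Jordan_Normal_Form.Matrix"
begin

text \<open>Skew polynomials F[x;theta] are represented by their coefficient sequences,
  using the additive structure of the type 'a poly (coefficients on the left).
  Multiplication is the skew multiplication determined by x b = theta(b) x.\<close>

definition field_automorphism :: "('a::field \<Rightarrow> 'a) \<Rightarrow> bool" where
  "field_automorphism \<theta> \<longleftrightarrow> bij \<theta> \<and> (\<forall>x y. \<theta> (x + y) = \<theta> x + \<theta> y)
     \<and> (\<forall>x y. \<theta> (x * y) = \<theta> x * \<theta> y) \<and> \<theta> 1 = 1"

definition theta_pow :: "('a \<Rightarrow> 'a) \<Rightarrow> int \<Rightarrow> 'a \<Rightarrow> 'a" where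
  "theta_pow \<theta> m = (if m \<ge> 0 then \<theta> ^^ nat m else (inv_into UNIV \<theta>) ^^ nat (- m))"

definition skew_mult :: "('a::field \<Rightarrow> 'a) \<Rightarrow> 'a poly \<Rightarrow> 'a poly \<Rightarrow> 'a poly" where
  "skew_mult \<theta> f g = (\<Sum>i\<le>degree f. \<Sum>j\<le>degree g. monom (coeff f i * (\<theta> ^^ i) (coeff g j)) (i + j))"

abbreviation xpow :: "nat \<Rightarrow> 'a::field poly" where
  "xpow i \<equiv> monom 1 i"

text \<open>Representative of the coset of f in S_b = R / R(x^n - b): the unique r of degree < n
  with f - r in the left ideal R(x^n - b).  Its coefficients 0..n-1 form v_b(coset of f).\<close>
definition skew_rem :: "('a::field \<Rightarrow> 'a) \<Rightarrow> nat \<Rightarrow> 'a \<Rightarrow> 'a poly \<Rightarrow> 'a poly" where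
  "skew_rem \<theta> n b f = (THE r. degree r < n \<and> (\<exists>q. f = skew_mult \<theta> q (xpow n - [:b:]) + r))"

definition circulant :: "('a::field \<Rightarrow> 'a) \<Rightarrow> nat \<Rightarrow> 'a \<Rightarrow> 'a poly \<Rightarrow> 'a mat" where
  "circulant \<theta> n b f = mat n n (\<lambda>(i, j). coeff (skew_rem \<theta> n b (skew_mult \<theta> (xpow i) f)) j)"

definition theta_poly :: "('a::field \<Rightarrow> 'a) \<Rightarrow> int \<Rightarrow> 'a poly \<Rightarrow> 'a poly" where
  "theta_poly \<theta> m f = map_poly (theta_pow \<theta> m) f"

definition gamma :: "('a::field \<Rightarrow> 'a) \<Rightarrow> nat \<Rightarrow> 'a \<Rightarrow> 'a poly \<Rightarrow> 'a" where
  "gamma \<theta> n a g = a * inverse (coeff g 0) * (\<theta> ^^ n) (coeff g 0)"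

definition rho_l :: "('a::field \<Rightarrow> 'a) \<Rightarrow> 'a poly \<Rightarrow> 'a poly" where
  "rho_l \<theta> f = (\<Sum>i\<le>degree f. monom ((\<theta> ^^ i) (coeff f (degree f - i))) i)"

definition rho_r :: "('a::field \<Rightarrow> 'a) \<Rightarrow> 'a poly \<Rightarrow> 'a poly" where
  "rho_r \<theta> f = (\<Sum>i\<le>degree f. monom (theta_pow \<theta> (int i - int (degree f)) (coeff f (degree f - i))) i)"

end

theory Submission
  imports Defs
begin

text \<open>Row \<open>i\<close> of \<open>M_b(f)\<close> is the remainder of \<open>x^i f\<close> modulo \<open>x^n - b\<close>; for \<open>deg f \<le> n\<close>
  each entry involves only two coefficients of \<open>f\<close>, so the transpose of such a circulant is again
  a circulant precisely when the coefficients satisfy a reflection condition. From \<open>x^n - a = h g\<close>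
  and \<open>x^n g = \<theta>^n(g) x^n\<close> one obtains \<open>(x^n - c) g = \<theta>^n(g) (x^n - a)\<close> for \<open>c = \<gamma>(a, g)\<close>.
  Read coefficientwise this is the reflection condition for (1). It also lets right multiplication
  by \<open>g\<close> pass from the modulus \<open>x^n - c\<close> to \<open>x^n - a\<close>, so \<open>M_c(x^k) M_a(g) = M_a(x^k g)\<close> and (2)
  again reduces to a reflection. Cancelling \<open>g\<close> gives the corresponding relation for \<open>h\<close>, which is
  inherited by the left reciprocal of \<open>\<theta>^-n(h)\<close>; (3) is then (2) for that reciprocal.\<close>

lemma coeff_const_poly: "coeff [:c:] i = (if i = 0 then c else 0)"
  by (cases i) auto

lemma coeff_sum_monom: "coeff (\<Sum>s<n. monom (F s) s) m = (if m < n then F m else 0)"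
  by (simp add: coeff_sum coeff_monom)

lemma circulant_dim [simp]:
  "dim_row (circulant \<theta> n b f) = n" "dim_col (circulant \<theta> n b f) = n"
  by (auto simp: circulant_def)

lemma theta_pow_of_nat [simp]: "theta_pow \<theta> (int m) = \<theta> ^^ m"
  by (simp add: theta_pow_def)

lemma theta_pow_uminus_of_nat: "theta_pow \<theta> (- int m) = inv_into UNIV \<theta> ^^ m"
  by (cases "m = 0") (auto simp: theta_pow_def)

text \<open>The cofactor \<open>\<theta>^n(g)\<close> witnesses \<open>(x^n - c) g \<in> R (x^n - a)\<close>, so right multiplication
  by \<open>g\<close> induces a map \<open>S_c \<rightarrow> S_a\<close>.\<close>
definition intertwines :: "('a::field \<Rightarrow> 'a) \<Rightarrow> nat \<Rightarrow> 'a \<Rightarrow> 'a \<Rightarrow> 'a poly \<Rightarrow> bool" where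
  "intertwines \<theta> n c a g \<longleftrightarrow>
     skew_mult \<theta> (xpow n - [:c:]) g = skew_mult \<theta> (map_poly (\<theta> ^^ n) g) (xpow n - [:a:])"

locale skew_polynomial_ring =
  fixes \<theta> :: "'a::field \<Rightarrow> 'a"
  assumes automorphism: "field_automorphism \<theta>"
begin

lemma bij_theta: "bij \<theta>"
  using automorphism by (simp add: field_automorphism_def)

lemma iter_add [simp]: "(\<theta> ^^ i) (x + y) = (\<theta> ^^ i) x + (\<theta> ^^ i) y"
  using automorphism by (induction i) (auto simp: field_automorphism_def)

lemma iter_mult [simp]: "(\<theta> ^^ i) (x * y) = (\<theta> ^^ i) x * (\<theta> ^^ i) y"
  using automorphism by (induction i) (auto simp: field_automorphism_def)

lemma iter_1 [simp]: "(\<theta> ^^ i) 1 = 1"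
  using automorphism by (induction i) (auto simp: field_automorphism_def)

lemma iter_0 [simp]: "(\<theta> ^^ i) 0 = 0"
proof -
  have "(\<theta> ^^ i) 0 + (\<theta> ^^ i) 0 = (\<theta> ^^ i) 0 + 0"
    using iter_add[of i 0 0] by simp
  then show ?thesis by (rule add_left_imp_eq)
qed

lemma iter_minus [simp]: "(\<theta> ^^ i) (- x) = - (\<theta> ^^ i) x"
  using iter_add[of i x "- x"] by (simp add: eq_neg_iff_add_eq_0 add.commute)

lemma iter_diff [simp]: "(\<theta> ^^ i) (x - y) = (\<theta> ^^ i) x - (\<theta> ^^ i) y"
  using iter_add[of i x "- y"] by simp

lemma iter_eq_iff [simp]: "(\<theta> ^^ i) x = (\<theta> ^^ i) y \<longleftrightarrow> x = y"
  using bij_theta by (meson bij_is_inj inj_fn injD)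

lemma iter_eq_0_iff [simp]: "(\<theta> ^^ i) x = 0 \<longleftrightarrow> x = 0"
  using iter_eq_iff[of i x 0] by simp

lemma iter_inverse [simp]: "(\<theta> ^^ i) (inverse x) = inverse ((\<theta> ^^ i) x)"
proof (cases "x = 0")
  case False
  then have "(\<theta> ^^ i) x * (\<theta> ^^ i) (inverse x) = 1"
    using iter_mult[of i x "inverse x", symmetric] by simp
  then show ?thesis by (metis inverse_unique)
qed simp

lemma iter_divide [simp]: "(\<theta> ^^ i) (x / y) = (\<theta> ^^ i) x / (\<theta> ^^ i) y"
  by (simp add: divide_inverse)

lemma iter_iter [simp]: "(\<theta> ^^ i) ((\<theta> ^^ j) x) = (\<theta> ^^ (i + j)) x"
  by (simp add: funpow_add)

lemma iter_sum: "(\<theta> ^^ i) (sum f S) = (\<Sum>x\<in>S. (\<theta> ^^ i) (f x))"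
  by (induction S rule: infinite_finite_induct) auto

lemma iter_inv_iter [simp]: "(\<theta> ^^ m) ((inv_into UNIV \<theta> ^^ m) x) = x"
  using fn_o_inv_fn_is_id[OF bij_theta, of m] by (metis comp_apply)

lemma inv_iter_iter [simp]: "(inv_into UNIV \<theta> ^^ m) ((\<theta> ^^ m) x) = x"
  using inv_fn_o_fn_is_id[OF bij_theta, of m] by (metis comp_apply)

lemma inv_iter_0 [simp]: "(inv_into UNIV \<theta> ^^ m) 0 = 0"
  using inv_iter_iter[of m 0] by simp

lemma degree_map_iter [simp]: "degree (map_poly (\<theta> ^^ i) p) = degree p"
  by (rule degree_map_poly) simp

lemma theta_pow_iter:
  assumes "0 \<le> m + int j"
  shows "theta_pow \<theta> m ((\<theta> ^^ j) x) = (\<theta> ^^ nat (m + int j)) x"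
proof (cases "0 \<le> m")
  case True
  then show ?thesis by (simp add: theta_pow_def nat_add_distrib)
next
  case False
  define p where "p = nat (- m)"
  have "j = p + nat (m + int j)" using False assms p_def by linarith
  then have "(\<theta> ^^ j) x = (\<theta> ^^ p) ((\<theta> ^^ nat (m + int j)) x)"
    by (metis iter_iter)
  then show ?thesis using False by (simp add: theta_pow_def p_def del: iter_iter)
qed

lemma coeff_skew_mult:
  "coeff (skew_mult \<theta> f g) m = (\<Sum>i\<le>m. coeff f i * (\<theta> ^^ i) (coeff g (m - i)))"
proof -
  have inner: "(\<Sum>j\<le>degree g. if i + j = m then coeff f i * (\<theta> ^^ i) (coeff g j) else 0)
      = (if i \<le> m then coeff f i * (\<theta> ^^ i) (coeff g (m - i)) else 0)" for i
  proof (cases "i \<le> m")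
    case True
    have "(\<Sum>j\<le>degree g. if i + j = m then coeff f i * (\<theta> ^^ i) (coeff g j) else 0)
        = (\<Sum>j\<le>degree g. if j = m - i then coeff f i * (\<theta> ^^ i) (coeff g j) else 0)"
      using True by (intro sum.cong) auto
    also have "\<dots> = coeff f i * (\<theta> ^^ i) (coeff g (m - i))"
      by (auto simp: sum.delta' coeff_eq_0)
    finally show ?thesis using True by simp
  qed auto
  have "coeff (skew_mult \<theta> f g) m
      = (\<Sum>i\<le>degree f. if i \<le> m then coeff f i * (\<theta> ^^ i) (coeff g (m - i)) else 0)"
    by (simp add: skew_mult_def coeff_sum coeff_monom inner)
  also have "\<dots> = (\<Sum>i\<le>degree f + m. if i \<le> m then coeff f i * (\<theta> ^^ i) (coeff g (m - i)) else 0)"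
    by (intro sum.mono_neutral_left) (auto simp: coeff_eq_0)
  also have "\<dots> = (\<Sum>i\<le>m. coeff f i * (\<theta> ^^ i) (coeff g (m - i)))"
  proof -
    have "{i\<in>{..degree f + m}. i \<le> m} = {..m}" by auto
    then show ?thesis by (simp add: sum.inter_filter[symmetric])
  qed
  finally show ?thesis .
qed

lemma skew_mult_assoc: "skew_mult \<theta> (skew_mult \<theta> f g) h = skew_mult \<theta> f (skew_mult \<theta> g h)"
proof (rule poly_eqI)
  fix m
  define G where "G i j = coeff f i * (\<theta> ^^ i) (coeff g j) * (\<theta> ^^ (i + j)) (coeff h (m - i - j))" for i j
  have "coeff (skew_mult \<theta> (skew_mult \<theta> f g) h) m = (\<Sum>p\<le>m. \<Sum>i\<le>p. G i (p - i))"
    by (auto simp: coeff_skew_mult G_def sum_distrib_right intro!: sum.cong)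
  also have "\<dots> = (\<Sum>(i, j)\<in>{(i, j). i + j \<le> m}. G i j)"
    by (rule sum.triangle_reindex_eq[symmetric])
  also have "{(i, j). i + j \<le> m} = (SIGMA i:{..m}. {..m - i})" by auto
  also have "(\<Sum>(i, j)\<in>(SIGMA i:{..m}. {..m - i}). G i j) = (\<Sum>i\<le>m. \<Sum>j\<le>m - i. G i j)"
    by (rule sum.Sigma[symmetric]) auto
  also have "\<dots> = coeff (skew_mult \<theta> f (skew_mult \<theta> g h)) m"
    by (auto simp: coeff_skew_mult G_def sum_distrib_left iter_sum diff_diff_add mult.assoc
        intro!: sum.cong)
  finally show "coeff (skew_mult \<theta> (skew_mult \<theta> f g) h) m = coeff (skew_mult \<theta> f (skew_mult \<theta> g h)) m" .
qed

lemma skew_mult_add_left: "skew_mult \<theta> (f + g) h = skew_mult \<theta> f h + skew_mult \<theta> g h"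
  by (rule poly_eqI) (simp add: coeff_skew_mult sum.distrib distrib_right)

lemma skew_mult_diff_left: "skew_mult \<theta> (f - g) h = skew_mult \<theta> f h - skew_mult \<theta> g h"
  by (rule poly_eqI) (simp add: coeff_skew_mult sum_subtractf left_diff_distrib)

lemma skew_mult_diff_right: "skew_mult \<theta> f (g - h) = skew_mult \<theta> f g - skew_mult \<theta> f h"
  by (rule poly_eqI) (simp add: coeff_skew_mult sum_subtractf right_diff_distrib)

lemma skew_mult_smult_left: "skew_mult \<theta> (Polynomial.smult c f) g = Polynomial.smult c (skew_mult \<theta> f g)"
  by (rule poly_eqI) (simp add: coeff_skew_mult sum_distrib_left mult.assoc)

lemma skew_mult_zero_left [simp]: "skew_mult \<theta> 0 g = 0"
  by (rule poly_eqI) (simp add: coeff_skew_mult)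

lemma skew_mult_zero_right [simp]: "skew_mult \<theta> f 0 = 0"
  by (rule poly_eqI) (simp add: coeff_skew_mult)

lemma skew_mult_sum_left: "skew_mult \<theta> (sum f A) g = (\<Sum>x\<in>A. skew_mult \<theta> (f x) g)"
  by (induction A rule: infinite_finite_induct) (simp_all add: skew_mult_add_left)

lemma coeff_skew_mult_0: "coeff (skew_mult \<theta> f g) 0 = coeff f 0 * coeff g 0"
  by (simp add: coeff_skew_mult)

lemma coeff_skew_mult_monom_left:
  "coeff (skew_mult \<theta> (monom c k) f) m = (if k \<le> m then c * (\<theta> ^^ k) (coeff f (m - k)) else 0)"
proof -
  have "coeff (skew_mult \<theta> (monom c k) f) m
      = (\<Sum>i\<le>m. if i = k \<and> k \<le> m then c * (\<theta> ^^ k) (coeff f (m - k)) else 0)"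
    unfolding coeff_skew_mult by (intro sum.cong) (auto simp: coeff_monom)
  then show ?thesis by (auto simp: sum.delta)
qed

lemma skew_mult_const_left: "skew_mult \<theta> [:c:] f = Polynomial.smult c f"
  by (rule poly_eqI) (simp add: coeff_skew_mult_monom_left flip: monom_0)

lemma coeff_skew_mult_const_right: "coeff (skew_mult \<theta> f [:c:]) m = coeff f m * (\<theta> ^^ m) c"
proof -
  have "coeff (skew_mult \<theta> f [:c:]) m = (\<Sum>i\<le>m. if i = m then coeff f i * (\<theta> ^^ i) c else 0)"
    unfolding coeff_skew_mult by (intro sum.cong) (auto simp: coeff_const_poly)
  then show ?thesis by simp
qed

lemma coeff_skew_mult_xpow_right:
  "coeff (skew_mult \<theta> f (xpow k)) m = (if k \<le> m then coeff f (m - k) else 0)"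
proof -
  have "coeff (skew_mult \<theta> f (xpow k)) m = (\<Sum>i\<le>m. if i = m - k \<and> k \<le> m then coeff f i else 0)"
    unfolding coeff_skew_mult by (intro sum.cong) (auto simp: coeff_monom)
  then show ?thesis by (auto simp: sum.delta)
qed

lemma xpow_skew_mult: "skew_mult \<theta> (xpow n) g = skew_mult \<theta> (map_poly (\<theta> ^^ n) g) (xpow n)"
  by (rule poly_eqI) (simp add: coeff_skew_mult_monom_left coeff_skew_mult_xpow_right coeff_map_poly)

lemma coeff_skew_mult_degree:
  "coeff (skew_mult \<theta> f g) (degree f + degree g) = lead_coeff f * (\<theta> ^^ degree f) (lead_coeff g)"
proof -
  have "coeff f i * (\<theta> ^^ i) (coeff g (degree f + degree g - i)) = 0" if "i \<noteq> degree f" for i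
    using that by (cases "i < degree f") (auto simp: coeff_eq_0)
  then have "coeff (skew_mult \<theta> f g) (degree f + degree g) =
      (\<Sum>i\<le>degree f + degree g. if i = degree f then coeff f i * (\<theta> ^^ i) (coeff g (degree g)) else 0)"
    unfolding coeff_skew_mult by (intro sum.cong) auto
  then show ?thesis by simp
qed

lemma coeff_skew_mult_above_degree:
  "degree f + degree g < m \<Longrightarrow> coeff (skew_mult \<theta> f g) m = 0"
  unfolding coeff_skew_mult
  by (intro sum.neutral ballI, case_tac "x \<le> degree f") (auto simp: coeff_eq_0)

lemma degree_skew_mult:
  "f \<noteq> 0 \<Longrightarrow> g \<noteq> 0 \<Longrightarrow> degree (skew_mult \<theta> f g) = degree f + degree g"
  by (intro antisym degree_le le_degree)
    (auto simp: coeff_skew_mult_degree coeff_skew_mult_above_degree)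

lemma skew_mult_eq_0_iff: "skew_mult \<theta> f g = 0 \<longleftrightarrow> f = 0 \<or> g = 0"
  using coeff_skew_mult_degree[of f g] by auto

lemma skew_mult_right_cancel:
  assumes "g \<noteq> 0" and "skew_mult \<theta> p g = skew_mult \<theta> q g"
  shows "p = q"
  using assms skew_mult_diff_left[of p q g] by (simp add: skew_mult_eq_0_iff)

lemma map_poly_skew_mult:
  "map_poly (\<theta> ^^ n) (skew_mult \<theta> p q) = skew_mult \<theta> (map_poly (\<theta> ^^ n) p) (map_poly (\<theta> ^^ n) q)"
  by (rule poly_eqI) (simp add: coeff_map_poly coeff_skew_mult iter_sum add.commute)

lemma degree_modulus: "0 < n \<Longrightarrow> degree (xpow n - [:b:] :: 'a poly) = n"
  by (intro antisym degree_le le_degree) (auto simp: coeff_const_poly)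

lemma skew_mult_monom_modulus:
  "skew_mult \<theta> (monom c m) (xpow n - [:b:]) = monom c (m + n) - monom (c * (\<theta> ^^ m) b) m"
  by (rule poly_eqI) (auto simp: coeff_skew_mult_monom_left coeff_monom coeff_const_poly right_diff_distrib)

lemma skew_division:
  assumes n: "0 < n"
  shows "\<exists>q r. degree r < n \<and> f = skew_mult \<theta> q (xpow n - [:b:]) + r"
proof (induction "degree f" arbitrary: f rule: less_induct)
  case less
  show ?case
  proof (cases "degree f < n")
    case True
    then show ?thesis by (intro exI[of _ 0] exI[of _ f]) simp
  next
    case False
    define m where "m = degree f - n"
    define f' where "f' = f - skew_mult \<theta> (monom (lead_coeff f) m) (xpow n - [:b:])"
    have "degree f' < degree f"
    proof (rule degree_lessI)
      show "f' \<noteq> 0 \<or> 0 < degree f" using False n by auto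
      show "\<forall>j\<ge>degree f. coeff f' j = 0"
        using False n by (auto simp: f'_def m_def skew_mult_monom_modulus coeff_monom coeff_eq_0)
    qed
    then obtain q r where "degree r < n" "f' = skew_mult \<theta> q (xpow n - [:b:]) + r"
      using less by blast
    then show ?thesis
      by (intro exI[of _ "q + monom (lead_coeff f) m"] exI[of _ r])
        (simp add: f'_def skew_mult_add_left algebra_simps)
  qed
qed

lemma skew_rem_eqI:
  assumes n: "0 < n" and r: "degree r < n" and f: "f = skew_mult \<theta> q (xpow n - [:b:]) + r"
  shows "skew_rem \<theta> n b f = r"
  unfolding skew_rem_def
proof (rule the_equality)
  show "degree r < n \<and> (\<exists>q. f = skew_mult \<theta> q (xpow n - [:b:]) + r)" using r f by blast
next
  fix r' assume "degree r' < n \<and> (\<exists>q. f = skew_mult \<theta> q (xpow n - [:b:]) + r')"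
  then obtain q' where r': "degree r' < n" and f': "f = skew_mult \<theta> q' (xpow n - [:b:]) + r'"
    by blast
  have eq: "skew_mult \<theta> (q - q') (xpow n - [:b:]) = r' - r"
    using f f' by (simp add: skew_mult_diff_left algebra_simps)
  have "degree (r' - r) < n" using r r' degree_diff_le_max[of r' r] by linarith
  have "q - q' = 0"
  proof (rule ccontr)
    assume "q - q' \<noteq> 0"
    moreover have "xpow n - [:b:] \<noteq> 0" using degree_modulus[OF n, of b] n by auto
    ultimately have "degree (r' - r) = degree (q - q') + n"
      using eq degree_skew_mult[of "q - q'" "xpow n - [:b:]"] degree_modulus[OF n, of b] by simp
    with \<open>degree (r' - r) < n\<close> show False by simp
  qed
  then show "r' = r" using eq by simp
qed

lemma skew_rem_mod:
  assumes n: "0 < n"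
  shows "degree (skew_rem \<theta> n b f) < n"
    and "\<exists>q. f = skew_mult \<theta> q (xpow n - [:b:]) + skew_rem \<theta> n b f"
proof -
  obtain q r where "degree r < n" "f = skew_mult \<theta> q (xpow n - [:b:]) + r"
    using skew_division[OF n] by blast
  moreover from this have "skew_rem \<theta> n b f = r" by (intro skew_rem_eqI[OF n])
  ultimately show "degree (skew_rem \<theta> n b f) < n"
    and "\<exists>q. f = skew_mult \<theta> q (xpow n - [:b:]) + skew_rem \<theta> n b f" by auto
qed

lemma skew_rem_0: "0 < n \<Longrightarrow> skew_rem \<theta> n b 0 = 0"
  by (rule skew_rem_eqI[where q = 0]) simp_all

lemma skew_rem_add:
  assumes n: "0 < n"
  shows "skew_rem \<theta> n b (f + g) = skew_rem \<theta> n b f + skew_rem \<theta> n b g"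
proof -
  obtain p q where "f = skew_mult \<theta> p (xpow n - [:b:]) + skew_rem \<theta> n b f"
    and "g = skew_mult \<theta> q (xpow n - [:b:]) + skew_rem \<theta> n b g"
    using skew_rem_mod(2)[OF n] by metis
  then have "f + g = skew_mult \<theta> (p + q) (xpow n - [:b:]) + (skew_rem \<theta> n b f + skew_rem \<theta> n b g)"
    by (simp add: skew_mult_add_left algebra_simps)
  moreover have "degree (skew_rem \<theta> n b f + skew_rem \<theta> n b g) < n"
    by (intro degree_add_less skew_rem_mod(1)[OF n])
  ultimately show ?thesis by (intro skew_rem_eqI[OF n])
qed

lemma skew_rem_smult:
  assumes n: "0 < n"
  shows "skew_rem \<theta> n b (Polynomial.smult c f) = Polynomial.smult c (skew_rem \<theta> n b f)"
proof -
  obtain q where "f = skew_mult \<theta> q (xpow n - [:b:]) + skew_rem \<theta> n b f"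
    using skew_rem_mod(2)[OF n] by metis
  then have "Polynomial.smult c f
      = skew_mult \<theta> (Polynomial.smult c q) (xpow n - [:b:]) + Polynomial.smult c (skew_rem \<theta> n b f)"
    by (metis skew_mult_smult_left smult_add_right)
  moreover have "degree (Polynomial.smult c (skew_rem \<theta> n b f)) < n"
    using skew_rem_mod(1)[OF n] degree_smult_le le_less_trans by blast
  ultimately show ?thesis by (intro skew_rem_eqI[OF n])
qed

lemma skew_rem_sum:
  assumes n: "0 < n"
  shows "skew_rem \<theta> n b (sum f A) = (\<Sum>x\<in>A. skew_rem \<theta> n b (f x))"
  by (induction A rule: infinite_finite_induct) (simp_all add: skew_rem_0[OF n] skew_rem_add[OF n])

lemma skew_rem_multiple_add:
  assumes n: "0 < n"
  shows "skew_rem \<theta> n b (skew_mult \<theta> p (xpow n - [:b:]) + f) = skew_rem \<theta> n b f"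
proof -
  obtain q where "f = skew_mult \<theta> q (xpow n - [:b:]) + skew_rem \<theta> n b f"
    using skew_rem_mod(2)[OF n] by metis
  then have "skew_mult \<theta> p (xpow n - [:b:]) + f
      = skew_mult \<theta> (p + q) (xpow n - [:b:]) + skew_rem \<theta> n b f"
    by (simp add: skew_mult_add_left algebra_simps)
  then show ?thesis by (intro skew_rem_eqI[OF n skew_rem_mod(1)[OF n]])
qed

text \<open>Modulo \<open>x^n - b\<close> the monomial \<open>x^(n+m)\<close> reduces to \<open>\<theta>^m(b) x^m\<close>, so only the two
  coefficients of \<open>f\<close> that land on \<open>x^l\<close> contribute to an entry.\<close>
lemma circulant_entry:
  assumes n: "0 < n" and df: "degree f \<le> n" and i: "i < n" and l: "l < n"
  shows "circulant \<theta> n b f $$ (i, l)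
    = (if i \<le> l then (\<theta> ^^ i) (coeff f (l - i)) else 0) + (\<theta> ^^ l) b * (\<theta> ^^ i) (coeff f (n + l - i))"
proof -
  define R where "R m = (if i \<le> m then (\<theta> ^^ i) (coeff f (m - i)) else 0)
    + (\<theta> ^^ m) b * (\<theta> ^^ i) (coeff f (n + m - i))" for m
  define q where "q = (\<Sum>s<n. monom ((\<theta> ^^ i) (coeff f (n + s - i))) s)"
  define r where "r = (\<Sum>s<n. monom (R s) s)"
  have "skew_mult \<theta> (xpow i) f = skew_mult \<theta> q (xpow n - [:b:]) + r"
  proof (rule poly_eqI)
    fix m
    have "coeff f (m - i) = 0" if "n \<le> m" "\<not> m - n < n"
      using that df i by (intro coeff_eq_0) linarith
    moreover have "n + (m - n) - i = m - i" if "n \<le> m" using that i by simp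
    ultimately show "coeff (skew_mult \<theta> (xpow i) f) m = coeff (skew_mult \<theta> q (xpow n - [:b:]) + r) m"
      using i by (cases "m < n") (simp_all add: coeff_skew_mult_monom_left skew_mult_diff_right
          coeff_skew_mult_xpow_right coeff_skew_mult_const_right q_def r_def coeff_sum_monom R_def)
  qed
  moreover have "degree r < n"
    using n by (intro degree_lessI) (auto simp: r_def coeff_sum_monom)
  ultimately have "skew_rem \<theta> n b (skew_mult \<theta> (xpow i) f) = r"
    by (intro skew_rem_eqI[OF n])
  then show ?thesis using i l by (simp add: circulant_def r_def coeff_sum_monom R_def)
qed

lemma circulant_mult:
  assumes n: "0 < n"
    and mult: "skew_mult \<theta> (xpow n - [:c:]) g = skew_mult \<theta> Q (xpow n - [:a:])"
  shows "circulant \<theta> n c f * circulant \<theta> n a g = circulant \<theta> n a (skew_mult \<theta> f g)"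
proof (rule eq_matI)
  fix i j
  assume "i < dim_row (circulant \<theta> n a (skew_mult \<theta> f g))"
    and "j < dim_col (circulant \<theta> n a (skew_mult \<theta> f g))"
  then have i: "i < n" and j: "j < n" by auto
  define R where "R = skew_rem \<theta> n c (skew_mult \<theta> (xpow i) f)"
  obtain q where q: "skew_mult \<theta> (xpow i) f = skew_mult \<theta> q (xpow n - [:c:]) + R"
    using skew_rem_mod(2)[OF n] unfolding R_def by blast
  have "degree R < n" unfolding R_def by (rule skew_rem_mod(1)[OF n])
  then have R_sum: "(\<Sum>l<n. Polynomial.smult (coeff R l) (xpow l)) = R"
    by (intro poly_eqI) (auto simp: smult_monom coeff_sum_monom coeff_eq_0)
  have "skew_mult \<theta> (xpow i) (skew_mult \<theta> f g) = skew_mult \<theta> (skew_mult \<theta> (xpow i) f) g"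
    by (simp add: skew_mult_assoc)
  also have "\<dots> = skew_mult \<theta> q (skew_mult \<theta> (xpow n - [:c:]) g) + skew_mult \<theta> R g"
    by (simp add: q skew_mult_add_left skew_mult_assoc)
  also have "\<dots> = skew_mult \<theta> (skew_mult \<theta> q Q) (xpow n - [:a:]) + skew_mult \<theta> R g"
    by (simp add: mult skew_mult_assoc)
  finally have "skew_rem \<theta> n a (skew_mult \<theta> (xpow i) (skew_mult \<theta> f g))
      = skew_rem \<theta> n a (skew_mult \<theta> R g)"
    by (simp add: skew_rem_multiple_add[OF n])
  also have "skew_mult \<theta> R g = skew_mult \<theta> (\<Sum>l<n. Polynomial.smult (coeff R l) (xpow l)) g"
    by (simp only: R_sum)
  finally have rem: "skew_rem \<theta> n a (skew_mult \<theta> (xpow i) (skew_mult \<theta> f g))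
      = (\<Sum>l<n. Polynomial.smult (coeff R l) (skew_rem \<theta> n a (skew_mult \<theta> (xpow l) g)))"
    by (simp add: skew_mult_sum_left skew_mult_smult_left skew_rem_sum[OF n] skew_rem_smult[OF n])
  show "(circulant \<theta> n c f * circulant \<theta> n a g) $$ (i, j) = circulant \<theta> n a (skew_mult \<theta> f g) $$ (i, j)"
    using i j by (simp add: circulant_def scalar_prod_def rem coeff_sum R_def[symmetric] atLeast0LessThan)
qed auto

lemma transpose_circulant:
  assumes n: "0 < n" and df: "degree f \<le> n" and df': "degree f' \<le> n"
    and upper: "\<And>e. 0 < e \<Longrightarrow> e < n \<Longrightarrow> coeff f' e = b * (\<theta> ^^ e) (coeff f (n - e))"
    and lower: "\<And>e. 0 < e \<Longrightarrow> e < n \<Longrightarrow> coeff f e = b' * (\<theta> ^^ e) (coeff f' (n - e))"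
    and diagonal: "coeff f 0 + b * coeff f n = coeff f' 0 + b' * coeff f' n"
  shows "transpose_mat (circulant \<theta> n b f) = circulant \<theta> n b' f'"
proof (rule eq_matI)
  fix i l
  assume "i < dim_row (circulant \<theta> n b' f')" and "l < dim_col (circulant \<theta> n b' f')"
  then have i: "i < n" and l: "l < n" by auto
  have "circulant \<theta> n b f $$ (l, i) = circulant \<theta> n b' f' $$ (i, l)"
    unfolding circulant_entry[OF n df l i] circulant_entry[OF n df' i l]
  proof (cases i l rule: linorder_cases)
    case less
    then obtain e where e: "l = i + e" "0 < e" using less_imp_add_positive by blast
    have "coeff f' (n + e) = 0" using df' e by (intro coeff_eq_0) simp
    then show "(if l \<le> i then (\<theta> ^^ l) (coeff f (i - l)) else 0) + (\<theta> ^^ i) b * (\<theta> ^^ l) (coeff f (n + i - l))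
      = (if i \<le> l then (\<theta> ^^ i) (coeff f' (l - i)) else 0) + (\<theta> ^^ l) b' * (\<theta> ^^ i) (coeff f' (n + l - i))"
      using e l upper[of e] by simp
  next
    case equal
    then show "(if l \<le> i then (\<theta> ^^ l) (coeff f (i - l)) else 0) + (\<theta> ^^ i) b * (\<theta> ^^ l) (coeff f (n + i - l))
      = (if i \<le> l then (\<theta> ^^ i) (coeff f' (l - i)) else 0) + (\<theta> ^^ l) b' * (\<theta> ^^ i) (coeff f' (n + l - i))"
      using arg_cong[OF diagonal, of "\<theta> ^^ i"] by simp
  next
    case greater
    then obtain d where d: "i = l + d" "0 < d" using less_imp_add_positive by blast
    have "coeff f (n + d) = 0" using df d by (intro coeff_eq_0) simp
    then show "(if l \<le> i then (\<theta> ^^ l) (coeff f (i - l)) else 0) + (\<theta> ^^ i) b * (\<theta> ^^ l) (coeff f (n + i - l))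
      = (if i \<le> l then (\<theta> ^^ i) (coeff f' (l - i)) else 0) + (\<theta> ^^ l) b' * (\<theta> ^^ i) (coeff f' (n + l - i))"
      using d i lower[of d] by simp
  qed
  then show "transpose_mat (circulant \<theta> n b f) $$ (i, l) = circulant \<theta> n b' f' $$ (i, l)"
    using i l by simp
qed auto

lemma intertwines_iff_coeff:
  "intertwines \<theta> n c a g \<longleftrightarrow> (\<forall>j. (\<theta> ^^ n) (coeff g j) * (\<theta> ^^ j) a = c * coeff g j)"
proof -
  have "coeff (skew_mult \<theta> (xpow n - [:c:]) g) j
      - coeff (skew_mult \<theta> (map_poly (\<theta> ^^ n) g) (xpow n - [:a:])) j
      = (\<theta> ^^ n) (coeff g j) * (\<theta> ^^ j) a - c * coeff g j" for j
    by (simp add: skew_mult_diff_left skew_mult_diff_right skew_mult_const_left coeff_map_poly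
        coeff_skew_mult_monom_left coeff_skew_mult_xpow_right coeff_skew_mult_const_right)
  then show ?thesis
    unfolding intertwines_def poly_eq_iff by (metis eq_iff_diff_eq_0)
qed

lemma map_iter_modulus: "map_poly (\<theta> ^^ n) (xpow n - [:a:]) = xpow n - [:(\<theta> ^^ n) a:]"
  by (rule poly_eqI) (simp add: coeff_map_poly coeff_monom coeff_const_poly)

lemma skew_mult_eq_0_if_degree_le:
  assumes g0: "coeff g 0 \<noteq> 0" and deg: "degree (skew_mult \<theta> p g) \<le> degree g"
    and const: "coeff (skew_mult \<theta> p g) 0 = 0"
  shows "skew_mult \<theta> p g = 0"
proof (rule ccontr)
  assume "skew_mult \<theta> p g \<noteq> 0"
  then have "p \<noteq> 0" and "g \<noteq> 0" by (auto simp: skew_mult_eq_0_iff)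
  then have "degree p = 0" using deg degree_skew_mult by simp
  then have "coeff p 0 \<noteq> 0" using \<open>p \<noteq> 0\<close> by (metis leading_coeff_0_iff)
  then show False using const g0 by (simp add: coeff_skew_mult_0)
qed

text \<open>The remainder \<open>\<theta>^n(g) a - c g\<close> is a left multiple of \<open>g\<close> of degree at most \<open>deg g\<close> whose
  constant term vanishes by the choice \<open>c = \<gamma>(a, g)\<close>; such a multiple is zero.\<close>
lemma right_factor_intertwines:
  assumes fact: "xpow n - [:a:] = skew_mult \<theta> h g" and g0: "coeff g 0 \<noteq> 0"
  shows "intertwines \<theta> n (gamma \<theta> n a g) a g"
proof -
  define c where "c = gamma \<theta> n a g"
  define G where "G = map_poly (\<theta> ^^ n) g"
  define D where "D = skew_mult \<theta> (xpow n - [:c:]) g - skew_mult \<theta> G (xpow n - [:a:])"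
  have D_rem: "D = skew_mult \<theta> G [:a:] - Polynomial.smult c g"
    by (simp add: D_def G_def skew_mult_diff_left skew_mult_diff_right skew_mult_const_left
        xpow_skew_mult)
  have "xpow n - [:c:] = (xpow n - [:a:]) + [:a - c:]"
    by (rule poly_eqI) (simp add: coeff_const_poly)
  then have "D = skew_mult \<theta> (skew_mult \<theta> h g + [:a - c:]) g - skew_mult \<theta> G (skew_mult \<theta> h g)"
    by (simp only: D_def fact)
  also have "\<dots> = skew_mult \<theta> (skew_mult \<theta> h g - skew_mult \<theta> G h + [:a - c:]) g"
    by (simp add: skew_mult_add_left skew_mult_diff_left skew_mult_assoc)
  finally have "D = skew_mult \<theta> (skew_mult \<theta> h g - skew_mult \<theta> G h + [:a - c:]) g" .
  moreover have "degree D \<le> degree g"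
    by (rule degree_le) (auto simp: D_rem G_def coeff_skew_mult_const_right coeff_map_poly coeff_eq_0)
  moreover have "coeff D 0 = 0"
    using g0 by (simp add: D_rem G_def c_def gamma_def coeff_skew_mult_const_right coeff_map_poly)
  ultimately have "D = 0" using skew_mult_eq_0_if_degree_le[OF g0] by metis
  then show ?thesis by (simp add: intertwines_def D_def G_def c_def)
qed

lemma left_factor_intertwines:
  assumes fact: "xpow n - [:a:] = skew_mult \<theta> h g" and g: "g \<noteq> 0"
    and intw: "intertwines \<theta> n c a g"
  shows "intertwines \<theta> n ((\<theta> ^^ n) a) c h"
  unfolding intertwines_def
proof (rule skew_mult_right_cancel[OF g])
  have "skew_mult \<theta> (skew_mult \<theta> (xpow n - [:(\<theta> ^^ n) a:]) h) g
      = skew_mult \<theta> (map_poly (\<theta> ^^ n) (xpow n - [:a:])) (xpow n - [:a:])"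
    by (simp add: skew_mult_assoc map_iter_modulus flip: fact)
  also have "\<dots> = skew_mult \<theta> (map_poly (\<theta> ^^ n) h) (skew_mult \<theta> (map_poly (\<theta> ^^ n) g) (xpow n - [:a:]))"
    by (simp add: fact map_poly_skew_mult skew_mult_assoc)
  also have "\<dots> = skew_mult \<theta> (skew_mult \<theta> (map_poly (\<theta> ^^ n) h) (xpow n - [:c:])) g"
    using intw by (simp add: intertwines_def skew_mult_assoc)
  finally show "skew_mult \<theta> (skew_mult \<theta> (xpow n - [:(\<theta> ^^ n) a:]) h) g
      = skew_mult \<theta> (skew_mult \<theta> (map_poly (\<theta> ^^ n) h) (xpow n - [:c:])) g" .
qed

lemma coeff_rho_l:
  "coeff (rho_l \<theta> q) m = (if m \<le> degree q then (\<theta> ^^ m) (coeff q (degree q - m)) else 0)"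
  by (simp add: rho_l_def coeff_sum coeff_monom)

lemma coeff_rho_r:
  "coeff (rho_r \<theta> p) m
    = (if m \<le> degree p then theta_pow \<theta> (int m - int (degree p)) (coeff p (degree p - m)) else 0)"
  by (simp add: rho_r_def coeff_sum coeff_monom)

lemma degree_rho_l: "coeff q 0 \<noteq> 0 \<Longrightarrow> degree (rho_l \<theta> q) = degree q"
  by (intro antisym degree_le le_degree) (auto simp: coeff_rho_l)

lemma rho_r_rho_l:
  assumes "coeff q 0 \<noteq> 0"
  shows "rho_r \<theta> (rho_l \<theta> q) = q"
proof (rule poly_eqI)
  fix m
  show "coeff (rho_r \<theta> (rho_l \<theta> q)) m = coeff q m"
  proof (cases "m \<le> degree q")
    case True
    then show ?thesis
      by (simp add: coeff_rho_r coeff_rho_l degree_rho_l[OF assms] theta_pow_iter)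
  next
    case False
    then show ?thesis by (simp add: coeff_rho_r degree_rho_l[OF assms] coeff_eq_0)
  qed
qed

lemma map_iter_rho_l: "map_poly (\<theta> ^^ n) (rho_l \<theta> q) = rho_l \<theta> (map_poly (\<theta> ^^ n) q)"
  by (rule poly_eqI) (simp add: coeff_map_poly coeff_rho_l add.commute)

lemma coeff_rho_r_theta_poly:
  assumes "degree g + k = n"
  shows "coeff (rho_r \<theta> (theta_poly \<theta> (int n) g)) m
    = (if m \<le> degree g then (\<theta> ^^ (m + k)) (coeff g (degree g - m)) else 0)"
proof -
  have "0 \<le> int m - int (degree g) + int n" and "nat (int m - int (degree g) + int n) = m + k"
    using assms by auto
  then show ?thesis
    by (simp add: coeff_rho_r theta_poly_def coeff_map_poly theta_pow_iter)
qed

lemma intertwines_rho_l: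
  assumes intw: "intertwines \<theta> n ((\<theta> ^^ n) \<alpha>) \<gamma> (map_poly (\<theta> ^^ n) q)"
    and dq: "degree q \<le> n" and \<alpha>: "\<alpha> \<noteq> 0" and \<beta>: "(\<theta> ^^ (n - degree q)) \<beta> * \<gamma> = 1"
  shows "intertwines \<theta> n \<beta> (inverse \<alpha>) (rho_l \<theta> q)"
  unfolding intertwines_iff_coeff
proof
  fix j
  have H: "(\<theta> ^^ (n + n)) (coeff q t) * (\<theta> ^^ t) \<gamma> = (\<theta> ^^ n) \<alpha> * (\<theta> ^^ n) (coeff q t)" for t
    using intw by (simp add: intertwines_iff_coeff coeff_map_poly)
  have \<gamma>: "\<gamma> \<noteq> 0" using \<beta> by auto
  show "(\<theta> ^^ n) (coeff (rho_l \<theta> q) j) * (\<theta> ^^ j) (inverse \<alpha>) = \<beta> * coeff (rho_l \<theta> q) j"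
  proof (cases "j \<le> degree q")
    case True
    define t where "t = degree q - j"
    have "(\<theta> ^^ (n - j)) \<beta> = (\<theta> ^^ t) ((\<theta> ^^ (n - degree q)) \<beta>)"
      using True dq by (simp add: t_def)
    also have "\<dots> = inverse ((\<theta> ^^ t) \<gamma>)"
      using \<beta> by (metis inverse_unique mult.commute iter_inverse)
    finally have \<beta>t: "(\<theta> ^^ (n - j)) \<beta> = inverse ((\<theta> ^^ t) \<gamma>)" .
    have "n - j + (n + j) = n + n" "n - j + j = n" using True dq by auto
    then have "(\<theta> ^^ (n - j)) ((\<theta> ^^ n) (coeff (rho_l \<theta> q) j) * (\<theta> ^^ j) (inverse \<alpha>))
        = (\<theta> ^^ (n - j)) (\<beta> * coeff (rho_l \<theta> q) j)"
      using True H[of t] \<alpha> \<gamma> by (simp add: coeff_rho_l \<beta>t field_simps flip: t_def)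
    then show ?thesis by (rule iter_eq_iff[THEN iffD1])
  qed (simp add: coeff_rho_l)
qed

lemma transpose_circulant_right_factor:
  assumes n: "0 < n" and dk: "degree g + k = n" and c: "c \<noteq> 0"
    and intw: "intertwines \<theta> n c a g"
  shows "transpose_mat (circulant \<theta> n a g) = circulant \<theta> n (inverse c)
    (skew_mult \<theta> (Polynomial.smult a (rho_r \<theta> (theta_poly \<theta> (int n) g))) (xpow k)
      - Polynomial.smult (c * coeff g 0) (xpow n - [:inverse c:]))"
    (is "_ = circulant \<theta> n _ ?g")
proof (rule transpose_circulant[OF n])
  have G: "(\<theta> ^^ n) (coeff g j) * (\<theta> ^^ j) a = c * coeff g j" for j
    using intw by (simp add: intertwines_iff_coeff)
  have coeff_g: "coeff ?g m = (if m \<le> n then a * (\<theta> ^^ m) (coeff g (n - m)) else 0)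
      - (if m = n then c * coeff g 0 else 0) + (if m = 0 then coeff g 0 else 0)" for m
  proof -
    have "coeff (skew_mult \<theta> (Polynomial.smult a (rho_r \<theta> (theta_poly \<theta> (int n) g))) (xpow k)) m
        = (if m \<le> n then a * (\<theta> ^^ m) (coeff g (n - m)) else 0)"
      using dk by (auto simp: coeff_skew_mult_xpow_right coeff_rho_r_theta_poly[OF dk] coeff_eq_0)
    then show ?thesis using n c by (auto simp: coeff_monom coeff_const_poly)
  qed
  show "degree g \<le> n" using dk by simp
  show "degree ?g \<le> n" by (rule degree_le) (auto simp only: coeff_g, auto)
  show "coeff ?g e = a * (\<theta> ^^ e) (coeff g (n - e))" if "0 < e" "e < n" for e
    using that unfolding coeff_g by simp
  show "coeff g e = inverse c * (\<theta> ^^ e) (coeff ?g (n - e))" if "0 < e" "e < n" for e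
    using that G[of e] c unfolding coeff_g by (simp add: field_simps)
  show "coeff g 0 + a * coeff g n = coeff ?g 0 + inverse c * coeff ?g n"
    using G[of 0] c n unfolding coeff_g by (simp add: field_simps)
qed

lemma transpose_circulant_xpow_right_factor:
  assumes n: "0 < n" and dk: "degree g + k = n" and c: "c \<noteq> 0"
    and intw: "intertwines \<theta> n c a g"
  shows "transpose_mat (circulant \<theta> n a (skew_mult \<theta> (xpow k) g))
    = circulant \<theta> n ((\<theta> ^^ k) (inverse c)) (Polynomial.smult a (rho_r \<theta> (theta_poly \<theta> (int n) g)))"
    (is "_ = circulant \<theta> n ?\<beta> ?F")
proof (rule transpose_circulant[OF n])
  have G: "(\<theta> ^^ n) (coeff g j) * (\<theta> ^^ j) a = c * coeff g j" for j
    using intw by (simp add: intertwines_iff_coeff)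
  have coeff_F: "coeff ?F m = (if m \<le> degree g then a * (\<theta> ^^ (m + k)) (coeff g (degree g - m)) else 0)"
    for m by (simp add: coeff_rho_r_theta_poly[OF dk])
  have coeff_xg: "coeff (skew_mult \<theta> (xpow k) g) m = (if k \<le> m then (\<theta> ^^ k) (coeff g (m - k)) else 0)"
    for m by (simp add: coeff_skew_mult_monom_left)
  show "degree (skew_mult \<theta> (xpow k) g) \<le> n"
  proof (intro degree_le allI impI)
    fix i assume "n < i"
    then show "coeff (skew_mult \<theta> (xpow k) g) i = 0" using dk unfolding coeff_xg by (simp add: coeff_eq_0)
  qed
  show "degree ?F \<le> n"
  proof (intro degree_le allI impI)
    fix i assume "n < i"
    then show "coeff ?F i = 0" using dk unfolding coeff_F by simp
  qed
  show "coeff ?F e = a * (\<theta> ^^ e) (coeff (skew_mult \<theta> (xpow k) g) (n - e))" if "0 < e" "e < n" for e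
    using that dk unfolding coeff_F coeff_xg by (auto simp: add.commute)
  show "coeff (skew_mult \<theta> (xpow k) g) e = ?\<beta> * (\<theta> ^^ e) (coeff ?F (n - e))" if "0 < e" "e < n" for e
  proof (cases "k \<le> e")
    case True
    have idx: "n - e \<le> degree g" "degree g - (n - e) = e - k" "e + (n - e + k) = n + k"
      using True that dk by auto
    have "?\<beta> * (\<theta> ^^ e) (coeff ?F (n - e))
        = inverse ((\<theta> ^^ k) c) * ((\<theta> ^^ (n + k)) (coeff g (e - k)) * (\<theta> ^^ e) a)"
      unfolding coeff_F using idx by (simp add: mult_ac)
    also have "(\<theta> ^^ (n + k)) (coeff g (e - k)) * (\<theta> ^^ e) a = (\<theta> ^^ k) c * (\<theta> ^^ k) (coeff g (e - k))"
      using arg_cong[OF G[of "e - k"], of "\<theta> ^^ k"] True by (simp add: add.commute)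
    finally show ?thesis unfolding coeff_xg using True c by simp
  next
    case False
    then show ?thesis using dk unfolding coeff_F coeff_xg by simp
  qed
  show "coeff (skew_mult \<theta> (xpow k) g) 0 + a * coeff (skew_mult \<theta> (xpow k) g) n
      = coeff ?F 0 + ?\<beta> * coeff ?F n"
  proof (cases "k = 0")
    case True
    moreover have "a * (\<theta> ^^ n) (coeff g 0) = c * coeff g 0" using G[of 0] by (simp add: mult.commute)
    ultimately show ?thesis using dk c unfolding coeff_F coeff_xg by simp
  next
    case False
    moreover have "n - k = degree g" "k \<le> n" "\<not> n \<le> degree g" using dk False by auto
    ultimately show ?thesis unfolding coeff_F coeff_xg by simp
  qed
qed

lemma circulant_xpow_mult_right_factor:
  assumes n: "0 < n" and dk: "degree g + k = n" and c: "c \<noteq> 0"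
    and intw: "intertwines \<theta> n c a g"
  shows "circulant \<theta> n c (xpow k) * circulant \<theta> n a g = transpose_mat
    (circulant \<theta> n ((\<theta> ^^ k) (inverse c)) (Polynomial.smult a (rho_r \<theta> (theta_poly \<theta> (int n) g))))"
proof -
  have "circulant \<theta> n c (xpow k) * circulant \<theta> n a g = circulant \<theta> n a (skew_mult \<theta> (xpow k) g)"
    using intw unfolding intertwines_def by (rule circulant_mult[OF n])
  then show ?thesis
    using transpose_circulant_xpow_right_factor[OF n dk c intw] by (metis transpose_transpose)
qed

lemma circulant_xpow_mult_left_factor:
  assumes n: "0 < n" and dh: "degree h \<le> n" and h0: "coeff h 0 \<noteq> 0" and a: "a \<noteq> 0"
    and c: "c \<noteq> 0" and intw: "intertwines \<theta> n ((\<theta> ^^ n) a) c h"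
  shows "circulant \<theta> n (theta_pow \<theta> (int (degree h) - int n) (inverse c)) (xpow (n - degree h))
      * circulant \<theta> n (inverse a) (rho_l \<theta> (theta_poly \<theta> (- int n) h))
    = transpose_mat (circulant \<theta> n c (Polynomial.smult (inverse a) h))"
proof -
  define q where "q = theta_poly \<theta> (- int n) h"
  define \<beta> where "\<beta> = theta_pow \<theta> (int (degree h) - int n) (inverse c)"
  have hq: "map_poly (\<theta> ^^ n) q = h"
    by (rule poly_eqI) (simp add: q_def theta_poly_def theta_pow_uminus_of_nat coeff_map_poly)
  then have dq: "degree q = degree h" and q0: "coeff q 0 \<noteq> 0"
    using h0 by (auto simp: coeff_map_poly)
  have "int (degree h) - int n = - int (n - degree h)" using dh by simp
  then have "\<beta> = (inv_into UNIV \<theta> ^^ (n - degree h)) (inverse c)"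
    unfolding \<beta>_def by (simp only: theta_pow_uminus_of_nat)
  then have \<beta>_iter: "(\<theta> ^^ (n - degree q)) \<beta> = inverse c" by (simp add: dq)
  have "circulant \<theta> n \<beta> (xpow (n - degree q)) * circulant \<theta> n (inverse a) (rho_l \<theta> q)
      = transpose_mat (circulant \<theta> n ((\<theta> ^^ (n - degree q)) (inverse \<beta>))
          (Polynomial.smult (inverse a) (rho_r \<theta> (theta_poly \<theta> (int n) (rho_l \<theta> q)))))"
  proof (rule circulant_xpow_mult_right_factor[OF n])
    show "degree (rho_l \<theta> q) + (n - degree q) = n" using dh by (simp add: degree_rho_l[OF q0] dq)
    show "\<beta> \<noteq> 0" using \<beta>_iter c by auto
    have "intertwines \<theta> n ((\<theta> ^^ n) a) c (map_poly (\<theta> ^^ n) q)" using intw by (simp only: hq)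
    then show "intertwines \<theta> n \<beta> (inverse a) (rho_l \<theta> q)"
      by (rule intertwines_rho_l) (use dh a c \<beta>_iter in \<open>simp_all add: dq\<close>)
  qed
  moreover have "rho_r \<theta> (theta_poly \<theta> (int n) (rho_l \<theta> q)) = h"
    using h0 by (simp add: theta_poly_def map_iter_rho_l hq rho_r_rho_l)
  moreover have "(\<theta> ^^ (n - degree q)) (inverse \<beta>) = c" using \<beta>_iter by simp
  ultimately show ?thesis by (simp only: dq, simp only: q_def \<beta>_def)
qed

end

theorem theorem5p6:
  fixes \<theta> :: "'a::{finite, field} \<Rightarrow> 'a"
    and n k :: nat and a :: 'a and g h :: "'a poly"
  assumes aut: "field_automorphism \<theta>"
    and a_nz: "a \<noteq> 0"
    and fact: "xpow n - [:a:] = skew_mult \<theta> h g"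
    and deg_h: "degree h = k"
  defines "c \<equiv> gamma \<theta> n a g"
    and "gr \<equiv> rho_r \<theta> (theta_poly \<theta> (int n) g)"
    and "hl \<equiv> rho_l \<theta> (theta_poly \<theta> (- int n) h)"
  shows "(transpose_mat (circulant \<theta> n a g) =
           circulant \<theta> n (inverse c)
             (skew_mult \<theta> (Polynomial.smult a gr) (xpow k) - Polynomial.smult (c * coeff g 0) (xpow n - [:inverse c:]))) \<and>
         (circulant \<theta> n c (xpow k) * circulant \<theta> n a g =
           transpose_mat (circulant \<theta> n ((\<theta> ^^ k) (inverse c)) (Polynomial.smult a gr))) \<and>
         (circulant \<theta> n (theta_pow \<theta> (int k - int n) (inverse c)) (xpow (n - k))
           * circulant \<theta> n (inverse a) hl =
           transpose_mat (circulant \<theta> n c (Polynomial.smult (inverse a) h)))"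
proof (cases "n = 0")
  case True
  then show ?thesis by (auto intro!: eq_matI)
next
  case False
  then have n: "0 < n" by simp
  interpret skew_polynomial_ring \<theta> by (rule skew_polynomial_ring.intro[OF aut])
  have "xpow n - [:a:] \<noteq> 0" using degree_modulus[OF n, of a] n by auto
  then have g: "g \<noteq> 0" and h: "h \<noteq> 0" using fact by (auto simp: skew_mult_eq_0_iff)
  have dk: "degree g + k = n"
    using fact degree_skew_mult[OF h g] degree_modulus[OF n, of a] deg_h by simp
  have "coeff h 0 * coeff g 0 = - a"
    using arg_cong[OF fact, of "\<lambda>p. coeff p 0"] n by (simp add: coeff_skew_mult_0 coeff_const_poly)
  then have g0: "coeff g 0 \<noteq> 0" and h0: "coeff h 0 \<noteq> 0" using a_nz by auto
  have c: "c \<noteq> 0" using a_nz g0 by (simp add: c_def gamma_def)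
  have intw_g: "intertwines \<theta> n c a g"
    unfolding c_def using fact g0 by (rule right_factor_intertwines)
  have intw_h: "intertwines \<theta> n ((\<theta> ^^ n) a) c h"
    using fact g intw_g by (rule left_factor_intertwines)
  have "degree h \<le> n" using dk deg_h by simp
  from circulant_xpow_mult_left_factor[OF n this h0 a_nz c intw_h]
  show ?thesis
    using transpose_circulant_right_factor[OF n dk c intw_g] circulant_xpow_mult_right_factor[OF n dk c intw_g]
    unfolding gr_def hl_def deg_h by blast
qed

end
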